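(* Let $n\ge2$, $\omega\in(0,1)$, and let $B$ be a random variable with mean $0$ and variance $1$. Let $B_1,\dots,B_n$ be independent with $B_i\overset d=\mu_i+\sigma_iB$, $\sigma_i>0$, $\sigma_1\le\cdots\le\sigma_n$. Let $$\alpha=\sqrt{\frac{1-\omega}{2\omega}+\frac{\sigma_{n-1}}{2\sum_{i=1}^{n-1}\sigma_i}}.$$ Then $$C(\mathrm{Id},\boldsymbol\mu+\alpha\boldsymbol\sigma,\omega)\le\sqrt{2\omega}\sum_{i=1}^{n-1}\sigma_i,$$ where $\boldsymbol\mu+\alpha\boldsymbol\sigma$ is the schedule with $x_i=\mu_i+\alpha\sigma_i$.
   Context: Appointment model: a sequence is a permutation $\tau\in\mathsf S_n$, $\tau(i)$ the patient in slot $i$; a schedule is $\boldsymbol x=(x_1,\dots,x_n)$, $x_j$ the interarrival time between patient $j$ and the next patient. Waiting and idle times: $W_1=I_1=0$, $W_{i+1}=(W_i+B_{\tau(i)}-x_{\tau(i)})^+$, $I_{i+1}=(W_i+B_{\tau(i)}-x_{\tau(i)})^-$, $a^+=\max\{0,a\}$, $a^-=\max\{0,-a\}$. Cost $C(\tau,\boldsymbol x,\omega)=\omega\sum_{i=1}^n\mathbb EI_i+(1-\omega)\sum_{i=1}^n\mathbb EW_i$. $\mathrm{Id}$ is the identity permutation. *)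

theory Defs
  imports "HOL-Probability.Probability"
begin

text \<open>Patients and slots are indexed 1..n. For a sequence tau, schedule x and a
realisation b of the service times (b j = service time of patient j),
wait tau x b k is the waiting time W_(k+1) of the patient in slot k+1 and
idle tau x b k is the idle time I_(k+1); in particular W_1 = I_1 = 0.\<close>

fun wait :: "(nat \<Rightarrow> nat) \<Rightarrow> (nat \<Rightarrow> real) \<Rightarrow> (nat \<Rightarrow> real) \<Rightarrow> nat \<Rightarrow> real" where
  "wait tau x b 0 = 0"
| "wait tau x b (Suc k) = max 0 (wait tau x b k + b (tau (Suc k)) - x (tau (Suc k)))"

fun idle :: "(nat \<Rightarrow> nat) \<Rightarrow> (nat \<Rightarrow> real) \<Rightarrow> (nat \<Rightarrow> real) \<Rightarrow> nat \<Rightarrow> real" where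
  "idle tau x b 0 = 0"
| "idle tau x b (Suc k) = max 0 (- (wait tau x b k + b (tau (Suc k)) - x (tau (Suc k))))"

definition cost :: "'a measure \<Rightarrow> (nat \<Rightarrow> 'a \<Rightarrow> real) \<Rightarrow> nat \<Rightarrow> (nat \<Rightarrow> nat)
    \<Rightarrow> (nat \<Rightarrow> real) \<Rightarrow> real \<Rightarrow> real" where
  "cost M Bs n tau x w =
     w * (\<Sum>k<n. integral\<^sup>L M (\<lambda>s. idle tau x (\<lambda>j. Bs j s) k))
     + (1 - w) * (\<Sum>k<n. integral\<^sup>L M (\<lambda>s. wait tau x (\<lambda>j. Bs j s) k))"

end

theory Submission
  imports Defs
begin

(*
  Let W_k, I_k be the waiting and idle times in slot k+1 and D_k = B_k - x_k, so that W_(k+1)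
  and I_(k+1) are the positive and negative parts of W_k + D_(k+1). For the schedule
  x = mu + alpha sigma the increment D_k has mean -alpha sigma_k and variance sigma_k^2.
  Taking expectations, E I_(k+1) = E W_(k+1) - E W_k + alpha sigma_(k+1), so the idle part of
  the cost telescopes to E W_(n-1) + alpha S with S = sigma_1 + ... + sigma_(n-1). Squaring
  instead, and using the independence of W_k and D_(k+1) together with (E I)^2 <= E I^2, gives
  E W_(k+1)^2 <= E W_k^2 + sigma_(k+1)^2 - 2 alpha sigma_(k+1) E W_(k+1); dividing by sigma_(k+1)
  and summing, which needs sigma to be nondecreasing, yields 2 alpha A + u^2 / sigma_(n-1) <= S
  for A = sum_k E W_k and u = E W_(n-1) <= A. It remains to maximise the cost
  w (u + alpha S) + (1 - w) A over this region: after replacing u^2 by its tangent this is a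
  linear programme, and a dual multiplier shows that for the given alpha the maximum is at most
  sqrt(2w) S.
*)

lemma wait_nonneg: "0 \<le> wait tau x b k"
  by (cases k) simp_all

lemma wait_Suc_minus_idle_Suc:
  "wait tau x b (Suc k) - idle tau x b (Suc k) = wait tau x b k + b (tau (Suc k)) - x (tau (Suc k))"
  by simp

lemma wait_Suc_sq_add_idle_Suc_sq:
  "(wait tau x b (Suc k))\<^sup>2 + (idle tau x b (Suc k))\<^sup>2
     = (wait tau x b k + b (tau (Suc k)) - x (tau (Suc k)))\<^sup>2"
  by (simp add: max_def power2_eq_square algebra_simps)

lemma wait_cong:
  "(\<And>j. 1 \<le> j \<Longrightarrow> j \<le> k \<Longrightarrow> b (tau j) = b' (tau j)) \<Longrightarrow> wait tau x b k = wait tau x b' k"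
  by (induction k) auto

lemma wait_measurable:
  "tau ` {1..k} \<subseteq> A \<Longrightarrow> (\<lambda>f. wait tau x f k) \<in> borel_measurable (PiM A (\<lambda>_. borel))"
proof (induction k)
  case (Suc k)
  then have [measurable]: "(\<lambda>f. f (tau (Suc k))) \<in> borel_measurable (PiM A (\<lambda>_. borel))"
    by (intro measurable_component_singleton) auto
  have "tau ` {1..k} \<subseteq> A" using Suc.prems by force
  then have [measurable]: "(\<lambda>f. wait tau x f k) \<in> borel_measurable (PiM A (\<lambda>_. borel))"
    by (rule Suc.IH)
  show ?case by simp
qed simp

lemma (in prob_space) sq_expectation_le:
  fixes X :: "'a \<Rightarrow> real"
  assumes "integrable M X" "integrable M (\<lambda>\<omega>. (X \<omega>)\<^sup>2)"
  shows "(expectation X)\<^sup>2 \<le> expectation (\<lambda>\<omega>. (X \<omega>)\<^sup>2)"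
  using variance_positive[of X] variance_eq[OF assms] by simp

lemma (in prob_space) variance_diff_const:
  fixes X :: "'a \<Rightarrow> real"
  assumes "integrable M X"
  shows "variance (\<lambda>\<omega>. X \<omega> - c) = variance X"
  using assms by (simp add: prob_space)

lemma (in prob_space) indep_var_sum_sq:
  fixes X Y :: "'a \<Rightarrow> real"
  assumes indep: "indep_var borel X borel Y"
    and X: "integrable M X" "integrable M (\<lambda>\<omega>. (X \<omega>)\<^sup>2)"
    and Y: "integrable M Y" "integrable M (\<lambda>\<omega>. (Y \<omega>)\<^sup>2)"
  shows "integrable M (\<lambda>\<omega>. (X \<omega> + Y \<omega>)\<^sup>2)"
    and "expectation (\<lambda>\<omega>. (X \<omega> + Y \<omega>)\<^sup>2)
      = expectation (\<lambda>\<omega>. (X \<omega>)\<^sup>2) + 2 * expectation X * expectation Y + expectation (\<lambda>\<omega>. (Y \<omega>)\<^sup>2)"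
proof -
  have XY: "integrable M (\<lambda>\<omega>. X \<omega> * Y \<omega>)"
    "expectation (\<lambda>\<omega>. X \<omega> * Y \<omega>) = expectation X * expectation Y"
    using indep_var_integrable[OF indep] indep_var_lebesgue_integral[OF indep] X Y by simp_all
  have "(\<lambda>\<omega>. (X \<omega> + Y \<omega>)\<^sup>2) = (\<lambda>\<omega>. (X \<omega>)\<^sup>2 + 2 * (X \<omega> * Y \<omega>) + (Y \<omega>)\<^sup>2)"
    by (simp add: fun_eq_iff power2_eq_square algebra_simps)
  then show "integrable M (\<lambda>\<omega>. (X \<omega> + Y \<omega>)\<^sup>2)"
    and "expectation (\<lambda>\<omega>. (X \<omega> + Y \<omega>)\<^sup>2)
      = expectation (\<lambda>\<omega>. (X \<omega>)\<^sup>2) + 2 * expectation X * expectation Y + expectation (\<lambda>\<omega>. (Y \<omega>)\<^sup>2)"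
    using X Y XY by simp_all
qed

lemma affine_copy_moments:
  fixes X :: "'a \<Rightarrow> real" and B :: "'b \<Rightarrow> real"
  assumes M: "prob_space M" and N: "prob_space N"
    and X: "X \<in> borel_measurable M" and B: "B \<in> borel_measurable N"
    and B_int: "integrable N B" "integrable N (\<lambda>s. (B s)\<^sup>2)"
    and distr: "distr M borel X = distr N borel (\<lambda>s. m + c * B s)"
  shows "integrable M X" "integrable M (\<lambda>\<omega>. (X \<omega>)\<^sup>2)"
    and "prob_space.expectation M X = m + c * prob_space.expectation N B"
    and "prob_space.variance M X = c\<^sup>2 * prob_space.variance N B"
proof -
  interpret M: prob_space M by (rule M)
  interpret N: prob_space N by (rule N)
  have [measurable]: "B \<in> borel_measurable N" by (rule B)
  have transfer:
    "integrable M (\<lambda>\<omega>. f (X \<omega>)) = integrable N (\<lambda>s. f (m + c * B s))"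
    "integral\<^sup>L M (\<lambda>\<omega>. f (X \<omega>)) = integral\<^sup>L N (\<lambda>s. f (m + c * B s))"
    if [measurable]: "f \<in> borel_measurable borel" for f :: "real \<Rightarrow> real"
    using integrable_distr_eq[OF X that] integral_distr[OF X that]
      integrable_distr_eq[of "\<lambda>s. m + c * B s" N borel f] integral_distr[of "\<lambda>s. m + c * B s" N borel f]
    by (simp_all add: distr)
  have sq: "(\<lambda>s. (m + c * B s)\<^sup>2) = (\<lambda>s. m\<^sup>2 + 2 * m * c * B s + c\<^sup>2 * (B s)\<^sup>2)"
    by (simp add: power2_eq_square algebra_simps)
  show "integrable M X" using transfer(1)[of "\<lambda>y. y"] B_int by simp
  show "integrable M (\<lambda>\<omega>. (X \<omega>)\<^sup>2)" using transfer(1)[of "\<lambda>y. y\<^sup>2"] B_int by (simp add: sq)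
  show mean: "M.expectation X = m + c * N.expectation B"
    using transfer(2)[of "\<lambda>y. y"] B_int by (simp add: N.prob_space)
  have "(\<lambda>s. (m + c * B s - M.expectation X)\<^sup>2) = (\<lambda>s. c\<^sup>2 * (B s - N.expectation B)\<^sup>2)"
    by (simp add: mean power2_eq_square algebra_simps)
  then show "M.variance X = c\<^sup>2 * N.variance B"
    using transfer(2)[of "\<lambda>y. (y - M.expectation X)\<^sup>2"] by simp
qed

locale lindley_process = prob_space +
  fixes Bs :: "nat \<Rightarrow> 'a \<Rightarrow> real" and tau :: "nat \<Rightarrow> nat" and x :: "nat \<Rightarrow> real" and n :: nat
  assumes indep_services: "indep_vars (\<lambda>_. borel) Bs {1..n}"
    and integrable_service: "\<And>i. i \<in> {1..n} \<Longrightarrow> integrable M (Bs i)"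
    and integrable_service_sq: "\<And>i. i \<in> {1..n} \<Longrightarrow> integrable M (\<lambda>\<omega>. (Bs i \<omega>)\<^sup>2)"
    and tau_inj: "inj_on tau {1..n}"
    and tau_into: "tau ` {1..n} \<subseteq> {1..n}"
begin

abbreviation W :: "nat \<Rightarrow> 'a \<Rightarrow> real" where
  "W k \<equiv> \<lambda>\<omega>. wait tau x (\<lambda>j. Bs j \<omega>) k"

abbreviation I :: "nat \<Rightarrow> 'a \<Rightarrow> real" where
  "I k \<equiv> \<lambda>\<omega>. idle tau x (\<lambda>j. Bs j \<omega>) k"

abbreviation D :: "nat \<Rightarrow> 'a \<Rightarrow> real" where
  "D k \<equiv> \<lambda>\<omega>. Bs (tau k) \<omega> - x (tau k)"

lemma integrable_increment:
  assumes "k \<in> {1..n}"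
  shows "integrable M (D k)" "integrable M (\<lambda>\<omega>. (D k \<omega>)\<^sup>2)"
proof -
  have i: "tau k \<in> {1..n}" using assms tau_into by blast
  have "(\<lambda>\<omega>. (D k \<omega>)\<^sup>2) = (\<lambda>\<omega>. (Bs (tau k) \<omega>)\<^sup>2 - 2 * x (tau k) * Bs (tau k) \<omega> + (x (tau k))\<^sup>2)"
    by (simp add: power2_eq_square algebra_simps)
  then show "integrable M (D k)" "integrable M (\<lambda>\<omega>. (D k \<omega>)\<^sup>2)"
    using integrable_service[OF i] integrable_service_sq[OF i] by simp_all
qed

lemma wait_Suc_eq: "W (Suc k) \<omega> = max 0 (W k \<omega> + D (Suc k) \<omega>)"
  by (simp add: add_diff_eq)

lemma idle_Suc_eq: "I (Suc k) \<omega> = W (Suc k) \<omega> - W k \<omega> - D (Suc k) \<omega>"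
  using wait_Suc_minus_idle_Suc[of tau x "\<lambda>j. Bs j \<omega>" k] by simp

lemma integrable_wait:
  assumes "k \<le> n"
  shows "integrable M (W k) \<and> integrable M (\<lambda>\<omega>. (W k \<omega>)\<^sup>2)"
  using assms
proof (induction k)
  case (Suc k)
  then have IH: "integrable M (W k)" "integrable M (\<lambda>\<omega>. (W k \<omega>)\<^sup>2)" by simp_all
  have D: "integrable M (D (Suc k))" "integrable M (\<lambda>\<omega>. (D (Suc k) \<omega>)\<^sup>2)"
    using integrable_increment[of "Suc k"] Suc.prems by simp_all
  have [measurable]: "W k \<in> borel_measurable M" "D (Suc k) \<in> borel_measurable M"
    using IH(1) D(1) by (simp_all only: borel_measurable_integrable)
  have "integrable M (\<lambda>\<omega>. max 0 (W k \<omega> + D (Suc k) \<omega>))"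
    using IH D by (intro integrable_max) simp_all
  moreover have "integrable M (\<lambda>\<omega>. (max 0 (W k \<omega> + D (Suc k) \<omega>))\<^sup>2)"
  proof (rule Bochner_Integration.integrable_bound)
    show "integrable M (\<lambda>\<omega>. 2 * (W k \<omega>)\<^sup>2 + 2 * (D (Suc k) \<omega>)\<^sup>2)" using IH D by simp
    have "(max 0 (v + d))\<^sup>2 \<le> 2 * v\<^sup>2 + 2 * d\<^sup>2" for v d :: real
      using zero_le_power2[of "v - d"]
      by (auto simp: max_def power2_eq_square algebra_simps)
    then show "AE \<omega> in M. norm ((max 0 (W k \<omega> + D (Suc k) \<omega>))\<^sup>2)
        \<le> norm (2 * (W k \<omega>)\<^sup>2 + 2 * (D (Suc k) \<omega>)\<^sup>2)"
      by simp
  qed simp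
  ultimately show ?case unfolding wait_Suc_eq by blast
qed simp

lemma indep_wait_increment:
  assumes "Suc k \<le> n"
  shows "indep_var borel (W k) borel (D (Suc k))"
proof -
  have disj: "tau ` {1..k} \<inter> {tau (Suc k)} = {}"
    using assms inj_on_image_mem_iff[OF tau_inj] by auto
  have sub: "tau ` {1..k} \<subseteq> {1..n}" "{tau (Suc k)} \<subseteq> {1..n}"
    using assms tau_into by (auto simp: image_subset_iff)
  have [measurable]: "(\<lambda>f. f (tau (Suc k))) \<in> borel_measurable (PiM {tau (Suc k)} (\<lambda>_. borel))"
    by (rule measurable_component_singleton) simp
  have "indep_var borel ((\<lambda>f. wait tau x f k) \<circ> (\<lambda>\<omega>. restrict (\<lambda>i. Bs i \<omega>) (tau ` {1..k})))
        borel ((\<lambda>f. f (tau (Suc k)) - x (tau (Suc k))) \<circ> (\<lambda>\<omega>. restrict (\<lambda>i. Bs i \<omega>) {tau (Suc k)}))"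
    by (rule indep_var_compose[OF indep_var_restrict[OF indep_services disj sub]])
      (simp_all add: wait_measurable)
  moreover have "(\<lambda>f. wait tau x f k) \<circ> (\<lambda>\<omega>. restrict (\<lambda>i. Bs i \<omega>) (tau ` {1..k})) = W k"
    by (rule ext) (auto intro: wait_cong)
  ultimately show ?thesis by (simp add: comp_def)
qed

lemma expectation_idle_Suc:
  assumes "Suc k \<le> n"
  shows "expectation (I (Suc k)) = expectation (W (Suc k)) - expectation (W k) - expectation (D (Suc k))"
  unfolding idle_Suc_eq
  using integrable_wait[of k] integrable_wait[of "Suc k"] integrable_increment[of "Suc k"] assms
  by simp

lemma expectation_wait_Suc_sq_le:
  assumes k: "Suc k \<le> n"
  shows "expectation (\<lambda>\<omega>. (W (Suc k) \<omega>)\<^sup>2)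
    \<le> expectation (\<lambda>\<omega>. (W k \<omega>)\<^sup>2) + variance (D (Suc k))
       + 2 * expectation (D (Suc k)) * expectation (W (Suc k))"
proof -
  have W: "integrable M (W k)" "integrable M (\<lambda>\<omega>. (W k \<omega>)\<^sup>2)"
    using integrable_wait[of k] k by simp_all
  have W': "integrable M (W (Suc k))" "integrable M (\<lambda>\<omega>. (W (Suc k) \<omega>)\<^sup>2)"
    using integrable_wait[of "Suc k"] k by simp_all
  have D: "integrable M (D (Suc k))" "integrable M (\<lambda>\<omega>. (D (Suc k) \<omega>)\<^sup>2)"
    using integrable_increment[of "Suc k"] k by simp_all
  note sum_sq = indep_var_sum_sq[OF indep_wait_increment[OF k] W D]
  have I_sq: "(\<lambda>\<omega>. (I (Suc k) \<omega>)\<^sup>2)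
      = (\<lambda>\<omega>. (W k \<omega> + D (Suc k) \<omega>)\<^sup>2 - (W (Suc k) \<omega>)\<^sup>2)"
    using wait_Suc_sq_add_idle_Suc_sq by (fastforce simp: fun_eq_iff algebra_simps)
  have "integrable M (I (Suc k))" unfolding idle_Suc_eq using W W' D by simp
  moreover have "integrable M (\<lambda>\<omega>. (I (Suc k) \<omega>)\<^sup>2)" unfolding I_sq using sum_sq W' by simp
  ultimately have "(expectation (I (Suc k)))\<^sup>2 \<le> expectation (\<lambda>\<omega>. (I (Suc k) \<omega>)\<^sup>2)"
    by (rule sq_expectation_le)
  also have "\<dots> = expectation (\<lambda>\<omega>. (W k \<omega> + D (Suc k) \<omega>)\<^sup>2)
      - expectation (\<lambda>\<omega>. (W (Suc k) \<omega>)\<^sup>2)"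
    unfolding I_sq using sum_sq W' by simp
  finally have "expectation (\<lambda>\<omega>. (W (Suc k) \<omega>)\<^sup>2)
      \<le> expectation (\<lambda>\<omega>. (W k \<omega> + D (Suc k) \<omega>)\<^sup>2) - (expectation (I (Suc k)))\<^sup>2"
    by simp
  also have "\<dots> = expectation (\<lambda>\<omega>. (W k \<omega>)\<^sup>2) + variance (D (Suc k))
       + 2 * expectation (D (Suc k)) * expectation (W (Suc k))
       - (expectation (W (Suc k)) - expectation (W k))\<^sup>2"
    unfolding sum_sq(2) expectation_idle_Suc[OF k] variance_eq[OF D]
    by (simp add: power2_eq_square algebra_simps)
  finally show ?thesis
    using zero_le_power2[of "expectation (W (Suc k)) - expectation (W k)"] by linarith
qed

lemma sum_expectation_idle:
  assumes "m \<le> n"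
  shows "(\<Sum>k\<le>m. expectation (I k)) = expectation (W m) - (\<Sum>k=1..m. expectation (D k))"
  using assms
proof (induction m)
  case (Suc m)
  then show ?case using expectation_idle_Suc[of m] by simp
qed simp

lemma cost_eq_moments:
  assumes "n = Suc m"
  shows "cost M Bs n tau x w = w * (expectation (W m) - (\<Sum>k=1..m. expectation (D k)))
           + (1 - w) * (\<Sum>k=1..m. expectation (W k))"
proof -
  have "(\<Sum>k\<le>m. expectation (W k)) = (\<Sum>k=1..m. expectation (W k))"
    by (simp add: atMost_atLeast0 sum.atLeast_Suc_atMost)
  then show ?thesis
    unfolding cost_def using sum_expectation_idle[of m] assms by (simp add: lessThan_Suc_atMost)
qed

end

lemma second_moment_recursion_sum_le:
  fixes a \<Phi> \<sigma> :: "nat \<Rightarrow> real" and c :: real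
  assumes "1 \<le> m"
    and \<Phi>_0: "\<Phi> 0 = 0" and \<Phi>_nonneg: "\<And>k. 0 \<le> \<Phi> k"
    and \<sigma>_pos: "\<And>k. 1 \<le> k \<Longrightarrow> k \<le> m \<Longrightarrow> 0 < \<sigma> k"
    and \<sigma>_mono: "\<And>k. 1 \<le> k \<Longrightarrow> k < m \<Longrightarrow> \<sigma> k \<le> \<sigma> (Suc k)"
    and step: "\<And>k. k < m \<Longrightarrow> \<Phi> (Suc k) \<le> \<Phi> k + (\<sigma> (Suc k))\<^sup>2 - 2 * c * \<sigma> (Suc k) * a (Suc k)"
  shows "2 * c * (\<Sum>k=1..m. a k) + \<Phi> m / \<sigma> m \<le> (\<Sum>k=1..m. \<sigma> k)"
proof -
  have normalized_step: "\<Phi> (Suc k) / \<sigma> (Suc k) \<le> \<Phi> k / \<sigma> (Suc k) + \<sigma> (Suc k) - 2 * c * a (Suc k)"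
    if "k < m" for k
  proof -
    have pos: "0 < \<sigma> (Suc k)" using that by (intro \<sigma>_pos) simp_all
    have "\<Phi> (Suc k) / \<sigma> (Suc k) \<le> (\<Phi> k + (\<sigma> (Suc k))\<^sup>2 - 2 * c * \<sigma> (Suc k) * a (Suc k)) / \<sigma> (Suc k)"
      using step[OF that] pos by (simp add: divide_right_mono)
    also have "\<dots> = \<Phi> k / \<sigma> (Suc k) + \<sigma> (Suc k) - 2 * c * a (Suc k)"
      using pos by (simp add: field_simps power2_eq_square)
    finally show ?thesis .
  qed
  have "2 * c * (\<Sum>k=1..j. a k) + \<Phi> j / \<sigma> j \<le> (\<Sum>k=1..j. \<sigma> k)" if "1 \<le> j" "j \<le> m" for j
    using that
  proof (induction j rule: nat_induct_at_least)
    case base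
    then show ?case using normalized_step[of 0] \<Phi>_0 by simp
  next
    case (Suc j)
    have "\<Phi> j / \<sigma> (Suc j) \<le> \<Phi> j / \<sigma> j"
      using Suc \<Phi>_nonneg[of j] by (intro divide_left_mono \<sigma>_mono mult_pos_pos \<sigma>_pos) simp_all
    then show ?case using Suc normalized_step[of j] by (simp add: distrib_left)
  qed
  then show ?thesis using assms(1) by simp
qed

lemma two_mult_le_sq_div_add_mult_sq:
  fixes r u v :: real
  assumes "0 < r"
  shows "2 * u * v \<le> u\<^sup>2 / r + r * v\<^sup>2"
proof -
  have "0 \<le> (u - r * v)\<^sup>2 / r" using assms by simp
  also have "\<dots> = u\<^sup>2 / r + r * v\<^sup>2 - 2 * u * v"
    using assms by (simp add: power2_eq_square field_simps)
  finally show ?thesis by simp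
qed

lemma linear_form_mono_on_wedge:
  fixes u A \<alpha> \<beta> \<gamma> \<delta> :: real
  assumes "0 \<le> u" "u \<le> A" "\<beta> \<le> \<delta>" "\<alpha> + \<beta> \<le> \<gamma> + \<delta>"
  shows "\<alpha> * u + \<beta> * A \<le> \<gamma> * u + \<delta> * A"
proof -
  have "0 \<le> (\<delta> - \<beta>) * (A - u) + (\<gamma> + \<delta> - \<alpha> - \<beta>) * u"
    using assms by simp
  then show ?thesis by (simp add: algebra_simps)
qed

lemma quartic_nonneg:
  fixes b w :: real
  assumes "0 < b" "b \<le> 1" "1 - w \<le> b\<^sup>2" "w \<le> 1"
  shows "2 * b\<^sup>2 * (b\<^sup>2 + w) + 3 * b\<^sup>2 - 1 + w \<le> 4 * b * (b\<^sup>2 + w)"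
proof -
  define t where "t = w - (1 - b\<^sup>2)"
  have t: "0 \<le> t" "t \<le> b\<^sup>2" using assms unfolding t_def by auto
  have "4 * b * (b\<^sup>2 + w) - (2 * b\<^sup>2 * (b\<^sup>2 + w) + 3 * b\<^sup>2 - 1 + w)
      = 4 * b * (1 - b) + t * (4 * b - 2 * b\<^sup>2 - 1)"
    unfolding t_def by (simp add: algebra_simps power2_eq_square)
  also have "\<dots> \<ge> 0"
  proof (cases "0 \<le> 4 * b - 2 * b\<^sup>2 - 1")
    case True
    then show ?thesis using assms t by simp
  next
    case False
    then have "b\<^sup>2 * (4 * b - 2 * b\<^sup>2 - 1) \<le> t * (4 * b - 2 * b\<^sup>2 - 1)"
      using t by (intro mult_right_mono_neg) simp_all
    moreover have "0 \<le> 4 * b * (1 - b) + b\<^sup>2 * (4 * b - 2 * b\<^sup>2 - 1)"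
    proof -
      have "b ^ 3 \<le> b\<^sup>2" using assms by (simp add: power_decreasing)
      moreover have "0 < 2 * (b - 5/4)\<^sup>2 + 7/8" by (simp add: add_nonneg_pos)
      ultimately have "0 \<le> 4 - 5 * b + 4 * b\<^sup>2 - 2 * b ^ 3"
        by (simp add: power2_eq_square algebra_simps)
      then have "0 \<le> b * (4 - 5 * b + 4 * b\<^sup>2 - 2 * b ^ 3)" using assms by simp
      then show ?thesis by (simp add: algebra_simps power2_eq_square power3_eq_cube)
    qed
    ultimately show ?thesis by linarith
  qed
  finally show ?thesis by simp
qed

lemma dual_multiplier_bound:
  fixes a p r S u A w :: real
  assumes a: "0 < a" and r: "0 < r" and u: "0 \<le> u" "u \<le> A"
    and constraint: "2 * a * A + u\<^sup>2 / r \<le> S"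
    and feasible: "1 - w \<le> 2 * a * p" "1 \<le> p / a + 2 * a * p"
  shows "(1 - w) * A + w * u \<le> p * (S + r / (4 * a\<^sup>2))"
proof -
  have p: "0 \<le> p"
  proof (rule ccontr)
    assume "\<not> 0 \<le> p"
    then have "p / a < 0" "2 * a * p < 0" using a by (simp_all add: divide_neg_pos mult_pos_neg)
    then show False using feasible(2) by linarith
  qed
  \<comment> \<open>Linearise the constraint with the tangent of u^2/r at u = r/(2a).\<close>
  have "u / a \<le> u\<^sup>2 / r + r / (4 * a\<^sup>2)"
    using two_mult_le_sq_div_add_mult_sq[OF r, of u "1 / (2 * a)"] a
    by (simp add: power_divide field_simps)
  then have relaxed: "2 * a * A + u / a \<le> S + r / (4 * a\<^sup>2)" using constraint by linarith
  have "w * u + (1 - w) * A \<le> (p / a) * u + (2 * a * p) * A"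
    using u feasible by (intro linear_form_mono_on_wedge) linarith+
  also have "\<dots> = p * (2 * a * A + u / a)" by (simp add: algebra_simps)
  also have "\<dots> \<le> p * (S + r / (4 * a\<^sup>2))" using relaxed p by (rule mult_left_mono)
  finally show ?thesis by simp
qed

lemma schedule_parameter_bounds:
  fixes w r S :: real
  defines "a \<equiv> sqrt ((1 - w) / (2 * w) + r / (2 * S))"
  defines "b \<equiv> sqrt (2 * w) * a"
  assumes w: "0 < w" "w < 1" and r: "0 < r" "r \<le> S"
  shows "0 < a" "0 < b" "b \<le> 1" "1 - w \<le> b\<^sup>2" "b\<^sup>2 = 2 * w * a\<^sup>2"
    and "b\<^sup>2 * S = (1 - w) * S + w * r"
proof -
  have S: "0 < S" using r by linarith
  show a: "0 < a" using w r S unfolding a_def by (auto intro!: add_pos_pos)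
  then show b_pos: "0 < b" using w unfolding b_def by simp
  show b_sq: "b\<^sup>2 = 2 * w * a\<^sup>2" using w unfolding b_def by (simp add: power_mult_distrib)
  have "a\<^sup>2 = (1 - w) / (2 * w) + r / (2 * S)"
    using w r S unfolding a_def by (auto intro!: add_pos_pos)
  then show b_sq_S: "b\<^sup>2 * S = (1 - w) * S + w * r"
    using w S unfolding b_sq by (simp add: field_simps)
  have "w * r \<le> w * S" using w r by simp
  then have "b\<^sup>2 * S \<le> 1 * S" using b_sq_S by (simp add: algebra_simps)
  then show "b \<le> 1" using S b_pos by (simp add: power_le_one_iff)
  have "(1 - w) * S \<le> b\<^sup>2 * S" using b_sq_S w r by simp
  then show "1 - w \<le> b\<^sup>2" using S by simp
qed

lemma dual_vertex_bounds:
  fixes w r S :: real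
  defines "a \<equiv> sqrt ((1 - w) / (2 * w) + r / (2 * S))"
  defines "T \<equiv> S + r / (4 * a\<^sup>2)"
  assumes w: "0 < w" "w < 1" and r: "0 < r" "r \<le> S"
  shows "w * a * S + (1 - w) / (2 * a) * T \<le> sqrt (2 * w) * S"
    and "w * a * S + a / (2 * a\<^sup>2 + 1) * T \<le> sqrt (2 * w) * S"
proof -
  define g where "g = sqrt (2 * w)"
  define b where "b = g * a"
  note ab = schedule_parameter_bounds[OF w r, folded a_def g_def, folded b_def]
  have S: "0 < S" using r by linarith
  have "1 - w \<le> 4 * w * a\<^sup>2" using ab w by simp
  then have "(1 - w) * r \<le> (4 * w * a\<^sup>2) * r" using r(1) by (intro mult_right_mono) simp_all
  then have "(1 - w) * r / (4 * a\<^sup>2) \<le> w * r"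
    using ab(1) by (simp add: pos_divide_le_eq algebra_simps)
  moreover have "2 * a * (w * a * S + (1 - w) / (2 * a) * T)
      = b\<^sup>2 * S + (1 - w) * S + (1 - w) * r / (4 * a\<^sup>2)"
    using ab(1) unfolding T_def ab(5) by (simp add: field_simps power2_eq_square)
  moreover have "b\<^sup>2 * S \<le> b * S" using ab(2,3) S by (simp add: power2_eq_square)
  ultimately have "2 * a * (w * a * S + (1 - w) / (2 * a) * T) \<le> 2 * a * (g * S)"
    using ab(6) unfolding b_def by (simp add: algebra_simps)
  then show "w * a * S + (1 - w) / (2 * a) * T \<le> g * S" using ab(1) by simp
  define d where "d = 2 * a\<^sup>2 + 1"
  have d: "0 < d" unfolding d_def by (simp add: add_nonneg_pos)
  have w_d: "w * d = b\<^sup>2 + w" unfolding d_def ab(5) by (simp add: algebra_simps)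
  have w_r: "w * r = b\<^sup>2 * S - (1 - w) * S" using ab(6) by simp
  have "4 * a * w * ((w * a * S) * d + a * T)
      = 2 * (2 * w * a\<^sup>2) * S * (w * d) + 2 * (2 * w * a\<^sup>2) * S + w * r"
    using ab(1) unfolding T_def by (simp add: field_simps power2_eq_square)
  also have "\<dots> = S * (2 * b\<^sup>2 * (b\<^sup>2 + w) + 3 * b\<^sup>2 - 1 + w)"
    unfolding ab(5)[symmetric] w_d w_r by (simp add: algebra_simps)
  also have "\<dots> \<le> S * (4 * b * (b\<^sup>2 + w))"
    using quartic_nonneg[OF ab(2,3,4)] w S by (simp add: less_imp_le)
  also have "\<dots> = 4 * a * w * ((g * S) * d)"
    unfolding w_d[symmetric] unfolding b_def by (simp add: algebra_simps)
  finally have "(w * a * S) * d + a * T \<le> (g * S) * d" using ab(1) w by simp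
  then show "w * a * S + a / (2 * a\<^sup>2 + 1) * T \<le> g * S"
    using d unfolding d_def[symmetric] by (simp add: field_simps)
qed

lemma schedule_cost_bound_algebra:
  fixes w S r u A :: real
  defines "a \<equiv> sqrt ((1 - w) / (2 * w) + r / (2 * S))"
  assumes w: "0 < w" "w < 1" and r: "0 < r" "r \<le> S"
    and u: "0 \<le> u" "u \<le> A" and constraint: "2 * a * A + u\<^sup>2 / r \<le> S"
  shows "w * (u + a * S) + (1 - w) * A \<le> sqrt (2 * w) * S"
proof -
  have a: "0 < a" using schedule_parameter_bounds(1)[OF w r] unfolding a_def .
  define d where "d = 2 * a\<^sup>2 + 1"
  have d: "0 < d" unfolding d_def by (simp add: add_nonneg_pos)
  \<comment> \<open>The two vertices of the dual feasible region.\<close>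
  define p\<^sub>1 where "p\<^sub>1 = (1 - w) / (2 * a)"
  define p\<^sub>2 where "p\<^sub>2 = a / d"
  have "(1 - w) * A + w * u \<le> max p\<^sub>1 p\<^sub>2 * (S + r / (4 * a\<^sup>2))"
  proof (rule dual_multiplier_bound[OF a r(1) u constraint])
    have "1 - w = 2 * a * p\<^sub>1" using a unfolding p\<^sub>1_def by simp
    then show "1 - w \<le> 2 * a * max p\<^sub>1 p\<^sub>2" using a by (simp add: le_max_iff_disj)
    have "1 = (2 * a\<^sup>2 + 1) / d" using d unfolding d_def by simp
    also have "\<dots> = p\<^sub>2 / a + 2 * a * p\<^sub>2"
      using a d unfolding p\<^sub>2_def by (simp add: field_simps power2_eq_square)
    also have "\<dots> \<le> max p\<^sub>1 p\<^sub>2 / a + 2 * a * max p\<^sub>1 p\<^sub>2"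
      using a by (intro add_mono divide_right_mono mult_left_mono) simp_all
    finally show "1 \<le> max p\<^sub>1 p\<^sub>2 / a + 2 * a * max p\<^sub>1 p\<^sub>2" .
  qed
  moreover note dual_vertex_bounds[OF w r, folded a_def, folded p\<^sub>1_def d_def, folded p\<^sub>2_def]
  ultimately show ?thesis by (simp add: max_def algebra_simps split: if_splits)
qed

lemma (in lindley_process) cost_le_of_increment_moments:
  fixes \<sigma> :: "nat \<Rightarrow> real" and c w :: real
  assumes n: "n = Suc m" and m: "1 \<le> m" and w: "0 < w" "w < 1"
    and \<sigma>_pos: "\<And>k. k \<in> {1..m} \<Longrightarrow> 0 < \<sigma> k"
    and \<sigma>_mono: "\<And>k. 1 \<le> k \<Longrightarrow> k < m \<Longrightarrow> \<sigma> k \<le> \<sigma> (Suc k)"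
    and mean: "\<And>k. k \<in> {1..m} \<Longrightarrow> expectation (D k) = - c * \<sigma> k"
    and var: "\<And>k. k \<in> {1..m} \<Longrightarrow> variance (D k) = (\<sigma> k)\<^sup>2"
    and c: "c = sqrt ((1 - w) / (2 * w) + \<sigma> m / (2 * (\<Sum>k=1..m. \<sigma> k)))"
  shows "cost M Bs n tau x w \<le> sqrt (2 * w) * (\<Sum>k=1..m. \<sigma> k)"
proof -
  define S where "S = (\<Sum>k=1..m. \<sigma> k)"
  define a where "a k = expectation (W k)" for k
  define \<Phi> where "\<Phi> k = expectation (\<lambda>\<omega>. (W k \<omega>)\<^sup>2)" for k
  have a_nonneg: "0 \<le> a k" for k unfolding a_def by (simp add: integral_nonneg_AE wait_nonneg)
  have \<sigma>_m: "0 < \<sigma> m" "\<sigma> m \<le> S"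
    using m \<sigma>_pos unfolding S_def by (auto intro!: member_le_sum intro: less_imp_le)
  have "2 * c * (\<Sum>k=1..m. a k) + \<Phi> m / \<sigma> m \<le> S"
    unfolding S_def
  proof (rule second_moment_recursion_sum_le[OF m])
    show "\<Phi> (Suc k) \<le> \<Phi> k + (\<sigma> (Suc k))\<^sup>2 - 2 * c * \<sigma> (Suc k) * a (Suc k)" if "k < m" for k
      using expectation_wait_Suc_sq_le[of k] mean[of "Suc k"] var[of "Suc k"] that n
      unfolding a_def \<Phi>_def by simp
  qed (use \<sigma>_pos \<sigma>_mono in \<open>simp_all add: \<Phi>_def integral_nonneg_AE\<close>)
  moreover have "(a m)\<^sup>2 / \<sigma> m \<le> \<Phi> m / \<sigma> m"
  proof (rule divide_right_mono)
    show "(a m)\<^sup>2 \<le> \<Phi> m"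
      unfolding a_def \<Phi>_def using integrable_wait[of m] n by (intro sq_expectation_le) simp_all
  qed (use \<sigma>_m in simp)
  ultimately have "2 * c * (\<Sum>k=1..m. a k) + (a m)\<^sup>2 / \<sigma> m \<le> S" by linarith
  moreover have "a m \<le> (\<Sum>k=1..m. a k)"
    using m a_nonneg by (intro member_le_sum) simp_all
  ultimately have "w * (a m + c * S) + (1 - w) * (\<Sum>k=1..m. a k) \<le> sqrt (2 * w) * S"
    unfolding c S_def[symmetric] by (intro schedule_cost_bound_algebra w \<sigma>_m a_nonneg)
  moreover have "(\<Sum>k=1..m. expectation (D k)) = - c * S"
    unfolding S_def sum_distrib_left using mean by (simp add: sum_negf)
  ultimately show ?thesis unfolding cost_eq_moments[OF n] a_def S_def by simp
qed

theorem proposition5p1: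
  fixes M :: "'a measure" and N :: "'b measure"
    and Bs :: "nat \<Rightarrow> 'a \<Rightarrow> real" and B :: "'b \<Rightarrow> real"
    and mu sigma :: "nat \<Rightarrow> real" and n :: nat and w :: real
  assumes n2: "n \<ge> 2"
    and w: "0 < w" "w < 1"
    and M: "prob_space M"
    and N: "prob_space N"
    and B_rv: "B \<in> borel_measurable N"
    and B_int: "integrable N B" "integrable N (\<lambda>s. (B s)\<^sup>2)"
    and B_mean: "prob_space.expectation N B = 0"
    and B_var: "prob_space.variance N B = 1"
    and indep: "prob_space.indep_vars M (\<lambda>_. borel) Bs {1..n}"
    and distr: "\<And>i. i \<in> {1..n} \<Longrightarrow>
                  distr M borel (Bs i) = distr N borel (\<lambda>s. mu i + sigma i * B s)"
    and sigma_pos: "\<And>i. i \<in> {1..n} \<Longrightarrow> sigma i > 0"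
    and sigma_mono: "\<And>i j. 1 \<le> i \<Longrightarrow> i \<le> j \<Longrightarrow> j \<le> n \<Longrightarrow> sigma i \<le> sigma j"
  shows "cost M Bs n id
           (\<lambda>i. mu i + sqrt ((1 - w) / (2 * w) + sigma (n - 1) / (2 * (\<Sum>i=1..n-1. sigma i))) * sigma i) w
         \<le> sqrt (2 * w) * (\<Sum>i=1..n-1. sigma i)"
proof -
  interpret M: prob_space M by (rule M)
  obtain m where n: "n = Suc m" and m: "1 \<le> m" using n2 by (cases n) auto
  define \<alpha> where "\<alpha> = sqrt ((1 - w) / (2 * w) + sigma m / (2 * (\<Sum>k=1..m. sigma k)))"
  define x where "x = (\<lambda>i. mu i + \<alpha> * sigma i)"
  have service: "integrable M (Bs i)" "integrable M (\<lambda>\<omega>. (Bs i \<omega>)\<^sup>2)"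
    "M.expectation (Bs i) = mu i" "M.variance (Bs i) = (sigma i)\<^sup>2" if "i \<in> {1..n}" for i
  proof -
    have "Bs i \<in> borel_measurable M" using indep that unfolding M.indep_vars_def by blast
    note moments = affine_copy_moments[OF M N this B_rv B_int distr[OF that]]
    show "integrable M (Bs i)" "integrable M (\<lambda>\<omega>. (Bs i \<omega>)\<^sup>2)" by (fact moments)+
    show "M.expectation (Bs i) = mu i" "M.variance (Bs i) = (sigma i)\<^sup>2"
      using moments(3,4) B_mean B_var by simp_all
  qed
  interpret lindley_process M Bs id x n
    by unfold_locales (use indep service in simp_all)
  have "cost M Bs n id x w \<le> sqrt (2 * w) * (\<Sum>k=1..m. sigma k)"
  proof (rule cost_le_of_increment_moments[OF n m w _ _ _ _ \<alpha>_def])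
    show "M.expectation (D k) = - \<alpha> * sigma k" "M.variance (D k) = (sigma k)\<^sup>2"
      if "k \<in> {1..m}" for k
      using service[of k] M.variance_diff_const that n by (simp_all add: x_def M.prob_space)
  qed (use sigma_pos sigma_mono n in auto)
  then show ?thesis using n unfolding x_def \<alpha>_def by simp
qed

end
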